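(* Let $H$ be the graph on vertex set $\{0,1,\dots,10\}$ in which $i,j$ are adjacent iff $1\le|i-j|\le3$. Suppose the edges of $H$ are colored red/blue with no red cycle of length $3$, $4$ or $5$, and at least one of the edges $\{0,1\},\{0,2\},\{0,3\}$ is blue. Then there exist $k\in\{1,\dots,9\}$ and a blue path $P_B$ in $H[\{0,\dots,k\}]$ with endpoints $0$ and $k$ such that at least one edge $\{k,k+j\}$ with $j\in\{1,2,3\}$, $k+j\le 10$, is blue, and $|V(P_B)\cap\{1,\dots,k\}|/k\ge 1/3$. As a consequence, for every $n\ge 2$, every red/blue coloring of $P_{3n+5}^3$ with no red cycle contains a blue path on $n$ vertices, so $\hat{R}(\mathcal{C},P_n)\le 9n+O(1)$.
   Context: $P_N^3$ is the graph on vertex set $\{1,\dots,N\}$ in which $i,j$ are adjacent iff $1\le|i-j|\le3$. $\hat{R}(\mathcal{C},P_n)$ is the minimum number of edges of a graph $G$ such that every red/blue coloring of $E(G)$ contains a red cycle or a blue path on $n$ vertices. *)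

theory Defs
  imports Main
begin

definition pow3_edges :: "nat set \<Rightarrow> nat set set" where
  "pow3_edges V = {{i, j} | i j. i \<in> V \<and> j \<in> V \<and> i < j \<and> j \<le> i + 3}"

definition is_path :: "nat set set \<Rightarrow> nat list \<Rightarrow> bool" where
  "is_path E vs \<longleftrightarrow> vs \<noteq> [] \<and> distinct vs \<and>
     (\<forall>i. i + 1 < length vs \<longrightarrow> {vs ! i, vs ! (i + 1)} \<in> E)"

definition is_cycle :: "nat set set \<Rightarrow> nat list \<Rightarrow> bool" where
  "is_cycle E vs \<longleftrightarrow> length vs \<ge> 3 \<and> distinct vs \<and>
     (\<forall>i < length vs. {vs ! i, vs ! ((i + 1) mod length vs)} \<in> E)"

definition red_edges :: "nat set set \<Rightarrow> (nat set \<Rightarrow> bool) \<Rightarrow> nat set set" where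
  "red_edges E red = {e \<in> E. red e}"

definition blue_edges :: "nat set set \<Rightarrow> (nat set \<Rightarrow> bool) \<Rightarrow> nat set set" where
  "blue_edges E red = {e \<in> E. \<not> red e}"

definition simple_graph :: "nat set set \<Rightarrow> bool" where
  "simple_graph E \<longleftrightarrow> finite E \<and> (\<forall>e \<in> E. card e = 2)"

definition arrows_C_P :: "nat set set \<Rightarrow> nat \<Rightarrow> bool" where
  "arrows_C_P E n \<longleftrightarrow> (\<forall>red. (\<exists>vs. is_cycle (red_edges E red) vs) \<or>
        (\<exists>vs. is_path (blue_edges E red) vs \<and> length vs = n))"

definition size_ramsey_C_P :: "nat \<Rightarrow> nat" where
  "size_ramsey_C_P n = (LEAST m. \<exists>E. simple_graph E \<and> card E = m \<and> arrows_C_P E n)"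

end

theory Submission
  imports Defs
begin

(* The first part is a finite check on the edges among 0, ..., 5: the absence of red triangles and
   red 4-cycles forces one of six blue configurations, each containing a suitable blue path.

   The second part grows a blue path greedily. Its invariant: a blue path in P_m^3 ending at m that
   uses at least a third of 1, ..., m, together with a blue edge from m to a later vertex. While
   10 more vertices remain, the first part applied to the window m, ..., m + 10 extends the path to
   some m + k while keeping the invariant; at the end one last blue edge is added, giving at least
   (N - 6) / 3 vertices. For N = 3n + 5 this is n, and P_N^3 has fewer than 3N edges. *)

lemma is_path_iff_successively:
  "is_path E vs \<longleftrightarrow> vs \<noteq> [] \<and> distinct vs \<and> successively (\<lambda>a b. {a, b} \<in> E) vs"
  by (simp add: is_path_def successively_conv_nth)

lemma is_cycle_iff_successively:
  "is_cycle E vs \<longleftrightarrow> 3 \<le> length vs \<and> distinct vs \<and> successively (\<lambda>a b. {a, b} \<in> E) (vs @ [hd vs])"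
proof (cases "vs = []")
  case False
  have "(\<forall>i < length vs. {vs ! i, vs ! ((i + 1) mod length vs)} \<in> E) \<longleftrightarrow>
        (\<forall>i. Suc i < length (vs @ [hd vs]) \<longrightarrow> {(vs @ [hd vs]) ! i, (vs @ [hd vs]) ! Suc i} \<in> E)"
  proof -
    have "(vs @ [hd vs]) ! Suc i = vs ! ((i + 1) mod length vs)" if "i < length vs" for i
      using that False by (cases "Suc i = length vs") (auto simp: nth_append hd_conv_nth)
    then show ?thesis by (auto simp: nth_append)
  qed
  then show ?thesis by (simp add: is_cycle_def successively_conv_nth)
qed (simp add: is_cycle_def)

lemma is_path_mono: "E \<subseteq> F \<Longrightarrow> is_path E vs \<Longrightarrow> is_path F vs"
  unfolding is_path_def by blast

lemma is_path_take: "is_path E vs \<Longrightarrow> 0 < n \<Longrightarrow> is_path E (take n vs)"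
  unfolding is_path_def by auto

lemma is_path_map:
  assumes "is_path E vs" "inj_on f (set vs)" "\<And>e. e \<in> E \<Longrightarrow> f ` e \<in> F"
  shows "is_path F (map f vs)"
proof -
  have "{f a, f b} \<in> F" if "{a, b} \<in> E" for a b
    using assms(3)[OF that] by simp
  then show ?thesis
    using assms(1,2) by (auto simp: is_path_iff_successively successively_map distinct_map
        elim!: successively_mono)
qed

lemma is_cycle_map:
  assumes "is_cycle E vs" "inj_on f (set vs)" "\<And>e. e \<in> E \<Longrightarrow> f ` e \<in> F"
  shows "is_cycle F (map f vs)"
proof -
  have edge: "{f a, f b} \<in> F" if "{a, b} \<in> E" for a b
    using assms(3)[OF that] by simp
  have "vs \<noteq> []" using assms(1) by (auto simp: is_cycle_def)
  then have "map f vs @ [hd (map f vs)] = map f (vs @ [hd vs])" by (simp add: hd_map)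
  moreover have "successively (\<lambda>a b. {a, b} \<in> F) (map f (vs @ [hd vs]))"
    using assms(1) edge unfolding successively_map is_cycle_iff_successively
    by (auto elim!: successively_mono)
  ultimately show ?thesis
    using assms(1,2) by (auto simp: is_cycle_iff_successively distinct_map)
qed

lemma is_path_append_tl:
  assumes "is_path E xs" "is_path E ys" "last xs = hd ys" "set xs \<inter> set (tl ys) = {}"
  shows "is_path E (xs @ tl ys)"
proof -
  obtain y ys' where "ys = y # ys'" using assms(2) by (cases ys) (auto simp: is_path_def)
  then show ?thesis
    using assms unfolding is_path_iff_successively successively_append_iff
    by (auto simp: successively_Cons)
qed

lemma set_is_path_subset: "is_path E vs \<Longrightarrow> set vs \<subseteq> insert (last vs) (\<Union>E)"
proof (induction vs)
  case (Cons v vs)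
  then show ?case
    by (cases vs) (auto simp: is_path_iff_successively successively_Cons)
qed simp

lemma insert_mem_pow3_edges:
  "{a, b} \<in> pow3_edges V \<longleftrightarrow> a \<in> V \<and> b \<in> V \<and> a \<noteq> b \<and> a \<le> b + 3 \<and> b \<le> a + 3"
proof
  assume "a \<in> V \<and> b \<in> V \<and> a \<noteq> b \<and> a \<le> b + 3 \<and> b \<le> a + 3"
  then show "{a, b} \<in> pow3_edges V"
    unfolding pow3_edges_def by (cases "a < b") (force, force simp: insert_commute)
qed (auto simp: pow3_edges_def doubleton_eq_iff)

lemma pow3_edges_mono: "V \<subseteq> W \<Longrightarrow> pow3_edges V \<subseteq> pow3_edges W"
  unfolding pow3_edges_def by fastforce

lemma pow3_edges_subset_Pow: "e \<in> pow3_edges V \<Longrightarrow> e \<subseteq> V"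
  unfolding pow3_edges_def by auto

lemma shift_mem_pow3_edges: "e \<in> pow3_edges V \<Longrightarrow> (+) (m::nat) ` e \<in> pow3_edges ((+) m ` V)"
  unfolding pow3_edges_def by force

lemma finite_pow3_edges: "finite V \<Longrightarrow> finite (pow3_edges V)"
  and card_pow3_edges_le: "finite V \<Longrightarrow> card (pow3_edges V) \<le> 3 * card V"
proof -
  assume "finite V"
  have sub: "pow3_edges V \<subseteq> (\<lambda>(i, d). {i, i + d}) ` (V \<times> {1, 2, 3})"
  proof
    fix e assume "e \<in> pow3_edges V"
    then obtain i j where "e = {i, j}" "i \<in> V" "i < j" "j \<le> i + 3"
      unfolding pow3_edges_def by blast
    then show "e \<in> (\<lambda>(i, d). {i, i + d}) ` (V \<times> {1, 2, 3})"
      by (intro image_eqI[of _ _ "(i, j - i)"]) auto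
  qed
  show "finite (pow3_edges V)"
    by (rule finite_subset[OF sub]) (simp add: \<open>finite V\<close>)
  then have "card (pow3_edges V) \<le> card ((\<lambda>(i, d). {i, i + d}) ` (V \<times> {1::nat, 2, 3}))"
    using \<open>finite V\<close> sub by (intro card_mono) simp_all
  also have "\<dots> \<le> card (V \<times> {1::nat, 2, 3})" by (rule card_image_le) (simp add: \<open>finite V\<close>)
  also have "\<dots> = 3 * card V" by (simp add: card_cartesian_product)
  finally show "card (pow3_edges V) \<le> 3 * card V" .
qed

lemma simple_graph_pow3_edges: "finite V \<Longrightarrow> simple_graph (pow3_edges V)"
  by (simp add: simple_graph_def finite_pow3_edges) (auto simp: pow3_edges_def)

lemma blue_edges_mono: "E \<subseteq> F \<Longrightarrow> blue_edges E red \<subseteq> blue_edges F red"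
  unfolding blue_edges_def by blast

lemma is_blue_path_window_mono:
  "V \<subseteq> W \<Longrightarrow> is_path (blue_edges (pow3_edges V) red) vs \<Longrightarrow> is_path (blue_edges (pow3_edges W) red) vs"
  by (rule is_path_mono[OF blue_edges_mono[OF pow3_edges_mono]])

lemma shift_mem_red_edges:
  "e \<in> red_edges (pow3_edges V) (\<lambda>e. red ((+) m ` e)) \<Longrightarrow> (+) (m::nat) ` e \<in> red_edges (pow3_edges ((+) m ` V)) red"
  by (simp add: red_edges_def shift_mem_pow3_edges)

lemma shift_mem_blue_edges:
  "e \<in> blue_edges (pow3_edges V) (\<lambda>e. red ((+) m ` e)) \<Longrightarrow> (+) (m::nat) ` e \<in> blue_edges (pow3_edges ((+) m ` V)) red"
  by (simp add: blue_edges_def shift_mem_pow3_edges)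

lemma window_blue_configurations:
  fixes red :: "nat set \<Rightarrow> bool"
  assumes no_short: "\<forall>vs. is_cycle (red_edges (pow3_edges {0..10}) red) vs \<longrightarrow> length vs \<notin> {3, 4, 5}"
    and blue_at_0: "\<not> red {0, 1} \<or> \<not> red {0, 2} \<or> \<not> red {0, 3}"
  obtains "\<not> red {0,1}" "\<not> red {1,2} \<or> \<not> red {1,3} \<or> \<not> red {1,4}"
    | "\<not> red {0,2}" "\<not> red {2,3} \<or> \<not> red {2,4}"
    | "\<not> red {0,3}" "\<not> red {3,4} \<or> \<not> red {3,5}"
    | "\<not> red {0,2}" "\<not> red {1,2}" "\<not> red {1,3}" "\<not> red {3,4}"
    | "\<not> red {0,3}" "\<not> red {1,3}" "\<not> red {1,2}" "\<not> red {2,4}" "\<not> red {4,5}"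
    | "\<not> red {0,3}" "\<not> red {2,3}" "\<not> red {1,2}" "\<not> red {1,4}" "\<not> red {4,5}"
proof -
  \<comment> \<open>Each listed \<open>vs\<close> is a 3- or 4-cycle of the window, and \<open>(a, b)\<close> runs over its edges.\<close>
  have not_all_red: "\<not> list_all (\<lambda>(a, b). red {a, b}) (zip vs (tl vs @ [hd vs]))"
    if "vs \<in> {[0,1,2], [0,1,3], [1,2,3], [1,3,4], [2,3,4], [3,4,5],
               [0,2,1,3], [0,1,4,2], [0,1,2,3], [0,1,3,2]}" for vs :: "nat list"
    using that no_short[rule_format, of vs]
    by (auto simp: is_cycle_iff_successively red_edges_def insert_mem_pow3_edges insert_commute)
  show ?thesis
    using that[atomize] blue_at_0
      not_all_red[of "[0,1,2]"] not_all_red[of "[0,1,3]"] not_all_red[of "[1,2,3]"]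
      not_all_red[of "[1,3,4]"] not_all_red[of "[2,3,4]"] not_all_red[of "[3,4,5]"]
      not_all_red[of "[0,2,1,3]"] not_all_red[of "[0,1,4,2]"] not_all_red[of "[0,1,2,3]"]
      not_all_red[of "[0,1,3,2]"]
    by (simp add: insert_commute) argo
qed

definition dense_blue_window_path :: "(nat set \<Rightarrow> bool) \<Rightarrow> nat \<Rightarrow> nat list \<Rightarrow> bool" where
  "dense_blue_window_path red k vs \<longleftrightarrow>
     is_path (blue_edges (pow3_edges {0..k}) red) vs \<and> hd vs = 0 \<and> last vs = k \<and>
     (\<exists>j \<in> {1, 2, 3}. k + j \<le> 10 \<and> \<not> red {k, k + j}) \<and> k \<le> 3 * card (set vs \<inter> {1..k})"

lemma window_blue_path:
  fixes red :: "nat set \<Rightarrow> bool"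
  assumes no_short: "\<forall>vs. is_cycle (red_edges (pow3_edges {0..10}) red) vs \<longrightarrow> length vs \<notin> {3, 4, 5}"
    and blue_at_0: "\<not> red {0, 1} \<or> \<not> red {0, 2} \<or> \<not> red {0, 3}"
  shows "\<exists>k \<in> {1..9}. \<exists>vs. dense_blue_window_path red k vs"
proof -
  note witness_simps = dense_blue_window_path_def is_path_iff_successively blue_edges_def
    insert_mem_pow3_edges insert_commute eval_nat_numeral
  have witness: "\<exists>k \<in> {1..9}. \<exists>vs. dense_blue_window_path red k vs"
    if "k \<in> {1..9}" "dense_blue_window_path red k vs" for k vs
    using that by blast
  from window_blue_configurations[OF assms] show ?thesis
  proof cases
    case 1 then show ?thesis by (intro witness[of 1 "[0,1]"]) (auto simp: witness_simps)
  next
    case 2 then show ?thesis by (intro witness[of 2 "[0,2]"]) (auto simp: witness_simps)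
  next
    case 3 then show ?thesis by (intro witness[of 3 "[0,3]"]) (auto simp: witness_simps)
  next
    case 4 then show ?thesis by (intro witness[of 3 "[0,2,1,3]"]) (auto simp: witness_simps)
  next
    case 5 then show ?thesis by (intro witness[of 4 "[0,3,1,2,4]"]) (auto simp: witness_simps)
  next
    case 6 then show ?thesis by (intro witness[of 4 "[0,3,2,1,4]"]) (auto simp: witness_simps)
  qed
qed

definition blue_frontier :: "(nat set \<Rightarrow> bool) \<Rightarrow> nat \<Rightarrow> nat \<Rightarrow> nat list \<Rightarrow> bool" where
  "blue_frontier red N m P \<longleftrightarrow>
     1 \<le> m \<and> is_path (blue_edges (pow3_edges {1..m}) red) P \<and> last P = m \<and> m \<le> 3 * length P \<and>
     (\<exists>j \<in> {1, 2, 3}. m + j \<le> N \<and> \<not> red {m, m + j})"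

lemma set_blue_frontier: "blue_frontier red N m P \<Longrightarrow> set P \<subseteq> {1..m}"
  unfolding blue_frontier_def
  by (fastforce dest: set_is_path_subset pow3_edges_subset_Pow simp: blue_edges_def)

lemma blue_frontier_start:
  assumes no_red_cycle: "\<nexists>vs. is_cycle (red_edges (pow3_edges {1..N}) red) vs" and "4 \<le> N"
  shows "\<exists>m. blue_frontier red N m [m]"
proof -
  have start: "blue_frontier red N s [s]"
    if "1 \<le> s" "s \<le> 3" "s < t" "t \<le> s + 3" "t \<le> N" "\<not> red {s, t}" for s t
    using that unfolding blue_frontier_def is_path_def by (intro conjI bexI[of _ "t - s"]) auto
  have "is_cycle (red_edges (pow3_edges {1..N}) red) [1, 2, 3]" if "red {1, 2}" "red {2, 3}" "red {1, 3}"
    using that \<open>4 \<le> N\<close>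
    by (auto simp: is_cycle_iff_successively red_edges_def insert_mem_pow3_edges insert_commute)
  then have "\<not> red {1, 2} \<or> \<not> red {2, 3} \<or> \<not> red {1, 3}"
    using no_red_cycle by blast
  then show ?thesis
    using start[of 1 2] start[of 2 3] start[of 1 3] \<open>4 \<le> N\<close> by auto
qed

lemma blue_frontier_finish:
  assumes "blue_frontier red N m P" "N \<le> m + 9"
  shows "\<exists>Q. is_path (blue_edges (pow3_edges {1..N}) red) Q \<and> N \<le> 3 * length Q + 6"
proof -
  from assms(1) obtain j where m: "1 \<le> m" and P: "is_path (blue_edges (pow3_edges {1..m}) red) P"
    "last P = m" "m \<le> 3 * length P" and j: "j \<in> {1, 2, 3}" "m + j \<le> N" "\<not> red {m, m + j}"
    unfolding blue_frontier_def by blast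
  have "is_path (blue_edges (pow3_edges {1..N}) red) P"
    using j(2) by (intro is_blue_path_window_mono[OF _ P(1)]) simp
  moreover have "is_path (blue_edges (pow3_edges {1..N}) red) [m, m + j]"
    using m j by (auto simp: is_path_def blue_edges_def insert_mem_pow3_edges)
  moreover have "set P \<inter> set (tl [m, m + j]) = {}"
    using set_blue_frontier[OF assms(1)] j(1) by auto
  ultimately have "is_path (blue_edges (pow3_edges {1..N}) red) (P @ [m + j])"
    using P(2) is_path_append_tl[of _ P "[m, m + j]"] by simp
  moreover have "N \<le> 3 * length (P @ [m + j]) + 6"
    using assms(2) P(3) by simp
  ultimately show ?thesis by blast
qed

(* The colouring \<lambda>e. red ((+) m ` e) is the window m, ..., m + 10 relabelled as 0, ..., 10. *)
lemma shifted_window_no_short_red_cycle: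
  assumes no_red_cycle: "\<nexists>vs. is_cycle (red_edges (pow3_edges {1..N}) red) vs"
    and "1 \<le> m" "m + 10 \<le> N"
  shows "\<forall>vs. is_cycle (red_edges (pow3_edges {0..10}) (\<lambda>e. red ((+) m ` e))) vs \<longrightarrow> length vs \<notin> {3, 4, 5}"
proof (intro allI impI)
  fix vs
  assume "is_cycle (red_edges (pow3_edges {0..10}) (\<lambda>e. red ((+) m ` e))) vs"
  moreover have "(+) m ` e \<in> red_edges (pow3_edges {1..N}) red"
    if "e \<in> red_edges (pow3_edges {0..10}) (\<lambda>e. red ((+) m ` e))" for e
  proof -
    have "pow3_edges ((+) m ` {0..10}) \<subseteq> pow3_edges {1..N}"
      using assms(2,3) by (intro pow3_edges_mono) auto
    then show ?thesis
      using shift_mem_red_edges[OF that] by (auto simp: red_edges_def)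
  qed
  ultimately have "is_cycle (red_edges (pow3_edges {1..N}) red) (map ((+) m) vs)"
    by (intro is_cycle_map) auto
  with no_red_cycle show "length vs \<notin> {3, 4, 5}" by blast
qed

lemma blue_frontier_extend:
  assumes frontier: "blue_frontier red N m P" and "m + 10 \<le> N" "1 \<le> k"
    and window: "dense_blue_window_path (\<lambda>e. red ((+) m ` e)) k vs"
  shows "blue_frontier red N (m + k) (P @ map ((+) m) (tl vs))"
proof -
  from window obtain j where vs: "is_path (blue_edges (pow3_edges {0..k}) (\<lambda>e. red ((+) m ` e))) vs"
    "hd vs = 0" "last vs = k" and j: "j \<in> {1, 2, 3}" "k + j \<le> 10" "\<not> red ((+) m ` {k, k + j})"
    and dense: "k \<le> 3 * card (set vs \<inter> {1..k})"
    unfolding dense_blue_window_path_def by blast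
  from frontier have m: "1 \<le> m" and P: "is_path (blue_edges (pow3_edges {1..m}) red) P"
    "last P = m" "m \<le> 3 * length P"
    unfolding blue_frontier_def by auto
  obtain vs' where vs': "vs = 0 # vs'" "vs' \<noteq> []" "0 \<notin> set vs'"
    using vs \<open>1 \<le> k\<close> by (cases vs) (auto simp: is_path_def split: if_splits)
  have "is_path (blue_edges (pow3_edges ((+) m ` {0..k})) red) (map ((+) m) vs)"
    by (rule is_path_map[OF vs(1) _ shift_mem_blue_edges]) simp
  then have "is_path (blue_edges (pow3_edges {1..m + k}) red) (m # map ((+) m) vs')"
    using m vs'(1) by (auto elim: is_blue_path_window_mono[rotated])
  moreover have "is_path (blue_edges (pow3_edges {1..m + k}) red) P"
    by (rule is_blue_path_window_mono[OF _ P(1)]) auto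
  moreover have "set P \<inter> set (map ((+) m) vs') = {}"
    using set_blue_frontier[OF frontier] vs'(3) by fastforce
  ultimately have path: "is_path (blue_edges (pow3_edges {1..m + k}) red) (P @ map ((+) m) vs')"
    using P(2) is_path_append_tl[of _ P "m # map ((+) m) vs'"] by simp
  have "card (set vs \<inter> {1..k}) \<le> length vs'"
  proof -
    have "card (set vs \<inter> {1..k}) \<le> card (set vs')"
      using vs'(1) by (intro card_mono) auto
    also have "\<dots> \<le> length vs'" by (rule card_length)
    finally show ?thesis .
  qed
  then have "m + k \<le> 3 * length (P @ map ((+) m) vs')"
    using P(3) dense by simp
  moreover have "last (P @ map ((+) m) vs') = m + k"
    using vs'(1,2) vs(3) by (simp add: last_map)
  moreover have "\<exists>j \<in> {1, 2, 3}. m + k + j \<le> N \<and> \<not> red {m + k, m + k + j}"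
    using j \<open>m + 10 \<le> N\<close> by (intro bexI[of _ j]) (auto simp: add.assoc)
  ultimately show ?thesis
    using m path vs'(1) by (simp add: blue_frontier_def)
qed

lemma blue_frontier_advance:
  assumes no_red_cycle: "\<nexists>vs. is_cycle (red_edges (pow3_edges {1..N}) red) vs"
    and frontier: "blue_frontier red N m P" and "m + 10 \<le> N"
  shows "\<exists>k P'. 1 \<le> k \<and> blue_frontier red N (m + k) P'"
proof -
  from frontier have "1 \<le> m" and "\<exists>j \<in> {1, 2, 3}. \<not> red {m, m + j}"
    unfolding blue_frontier_def by auto
  then have "\<not> red ((+) m ` {0, 1}) \<or> \<not> red ((+) m ` {0, 2}) \<or> \<not> red ((+) m ` {0, 3})"
    by auto
  then obtain k vs where "k \<in> {1..9}" "dense_blue_window_path (\<lambda>e. red ((+) m ` e)) k vs"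
    using window_blue_path[OF shifted_window_no_short_red_cycle[OF no_red_cycle \<open>1 \<le> m\<close> \<open>m + 10 \<le> N\<close>]]
    by blast
  then show ?thesis
    using blue_frontier_extend[OF frontier \<open>m + 10 \<le> N\<close>] by auto
qed

lemma blue_frontier_long_path:
  assumes no_red_cycle: "\<nexists>vs. is_cycle (red_edges (pow3_edges {1..N}) red) vs"
  shows "blue_frontier red N m P \<Longrightarrow>
    \<exists>Q. is_path (blue_edges (pow3_edges {1..N}) red) Q \<and> N \<le> 3 * length Q + 6"
proof (induction "N - m" arbitrary: m P rule: less_induct)
  case less
  show ?case
  proof (cases "m + 10 \<le> N")
    case True
    then obtain k P' where "1 \<le> k" and frontier': "blue_frontier red N (m + k) P'"
      using blue_frontier_advance[OF no_red_cycle less.prems] by blast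
    moreover from frontier' have "m + k < N"
      unfolding blue_frontier_def by auto
    ultimately show ?thesis
      using less.hyps[of "m + k" P'] by simp
  next
    case False
    then show ?thesis
      using blue_frontier_finish[OF less.prems] by simp
  qed
qed

lemma blue_path_if_no_red_cycle:
  assumes "0 < n" and no_red_cycle: "\<nexists>vs. is_cycle (red_edges (pow3_edges {1..3 * n + 5}) red) vs"
  shows "\<exists>vs. is_path (blue_edges (pow3_edges {1..3 * n + 5}) red) vs \<and> length vs = n"
proof -
  obtain m where "blue_frontier red (3 * n + 5) m [m]"
    using blue_frontier_start[OF no_red_cycle] by auto
  then obtain Q where Q: "is_path (blue_edges (pow3_edges {1..3 * n + 5}) red) Q"
    "3 * n + 5 \<le> 3 * length Q + 6"
    using blue_frontier_long_path[OF no_red_cycle] by blast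
  then have "length (take n Q) = n" by simp
  then show ?thesis
    using is_path_take[OF Q(1) \<open>0 < n\<close>] by blast
qed

lemma size_ramsey_C_P_le_card:
  "simple_graph E \<Longrightarrow> arrows_C_P E n \<Longrightarrow> size_ramsey_C_P n \<le> card E"
  unfolding size_ramsey_C_P_def by (rule Least_le) blast

lemma size_ramsey_C_P_le:
  assumes "0 < n"
  shows "size_ramsey_C_P n \<le> 9 * n + 15"
proof -
  have "arrows_C_P (pow3_edges {1..3 * n + 5}) n"
    using blue_path_if_no_red_cycle[OF \<open>0 < n\<close>] unfolding arrows_C_P_def by blast
  then have "size_ramsey_C_P n \<le> card (pow3_edges {1..3 * n + 5})"
    by (intro size_ramsey_C_P_le_card simple_graph_pow3_edges) simp
  also have "\<dots> \<le> 9 * n + 15"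
    using card_pow3_edges_le[of "{1..3 * n + 5}"] by simp
  finally show ?thesis .
qed

theorem mainTheorem7:
  shows
  "(\<forall>red :: nat set \<Rightarrow> bool.
      (\<forall>vs. is_cycle (red_edges (pow3_edges {0..10}) red) vs \<longrightarrow> length vs \<notin> {3, 4, 5}) \<and>
      (\<not> red {0, 1} \<or> \<not> red {0, 2} \<or> \<not> red {0, 3}) \<longrightarrow>
      (\<exists>k \<in> {1..9}. \<exists>vs.
          is_path (blue_edges (pow3_edges {0..k}) red) vs \<and> hd vs = 0 \<and> last vs = k \<and>
          (\<exists>j \<in> {1, 2, 3}. k + j \<le> 10 \<and> \<not> red {k, k + j}) \<and>
          3 * card (set vs \<inter> {1..k}) \<ge> k))
   \<and>
   (\<forall>n \<ge> 2. \<forall>red :: nat set \<Rightarrow> bool.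
      (\<nexists>vs. is_cycle (red_edges (pow3_edges {1..3 * n + 5}) red) vs) \<longrightarrow>
      (\<exists>vs. is_path (blue_edges (pow3_edges {1..3 * n + 5}) red) vs \<and> length vs = n))
   \<and>
   (\<exists>C :: nat. \<forall>n \<ge> 2. size_ramsey_C_P n \<le> 9 * n + C)"
proof (intro conjI allI impI)
  show "\<exists>k \<in> {1..9}. \<exists>vs.
          is_path (blue_edges (pow3_edges {0..k}) red) vs \<and> hd vs = 0 \<and> last vs = k \<and>
          (\<exists>j \<in> {1, 2, 3}. k + j \<le> 10 \<and> \<not> red {k, k + j}) \<and>
          3 * card (set vs \<inter> {1..k}) \<ge> k"
    if "(\<forall>vs. is_cycle (red_edges (pow3_edges {0..10}) red) vs \<longrightarrow> length vs \<notin> {3, 4, 5}) \<and>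
      (\<not> red {0, 1} \<or> \<not> red {0, 2} \<or> \<not> red {0, 3})" for red
    using that window_blue_path unfolding dense_blue_window_path_def by blast
  show "\<exists>vs. is_path (blue_edges (pow3_edges {1..3 * n + 5}) red) vs \<and> length vs = n"
    if "2 \<le> n" "\<nexists>vs. is_cycle (red_edges (pow3_edges {1..3 * n + 5}) red) vs" for n red
    using that by (intro blue_path_if_no_red_cycle) auto
  show "\<exists>C :: nat. \<forall>n \<ge> 2. size_ramsey_C_P n \<le> 9 * n + C"
    using size_ramsey_C_P_le by (intro exI[of _ 15]) auto
qed

end
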